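(* Let $R$ be an exchange ring and $A\in GL_n(R)$ with $n\ge 2$. Then $A$ can be transformed by a finite sequence of elementary row and column operations to a matrix whose $1,1$ entry $d$ is a (von Neumann) regular element with $dR=(1-p)R$ and $Rd=R(1-q)$ for some idempotents $p,q\in R$ such that $RpR=RqR=R$.
   Context: All rings are unital. A ring $R$ is an exchange ring if for every $a\in R$ there is an idempotent $e\in aR$ with $1-e\in(1-a)R$ (equivalently, $R_R$ has the finite exchange property). An element $x\in R$ is regular if $xyx=x$ for some $y\in R$. An elementary row (resp. column) operation adds a left (resp. right) multiple by an element of $R$ of one row (resp. column) to a different row (resp. column). *)

theory Defs
  imports "Jordan_Normal_Form.Matrix"
begin

definition exchange_ring :: "'a::ring_1 itself \<Rightarrow> bool" where
  "exchange_ring _ \<longleftrightarrow>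
     (\<forall>a::'a. \<exists>e. e * e = e \<and> (\<exists>r. e = a * r) \<and> (\<exists>s. 1 - e = (1 - a) * s))"

definition regular_elem :: "'a::ring_1 \<Rightarrow> bool" where
  "regular_elem x \<longleftrightarrow> (\<exists>y. x * y * x = x)"

definition two_sided_ideal :: "'a::ring_1 \<Rightarrow> 'a set" where
  "two_sided_ideal p = {x. \<exists>(m::nat) rs ss. x = (\<Sum>i<m. rs i * p * ss i)}"

definition row_op :: "'a::ring_1 \<Rightarrow> nat \<Rightarrow> nat \<Rightarrow> 'a mat \<Rightarrow> 'a mat" where
  "row_op c i j A = mat (dim_row A) (dim_col A)
     (\<lambda>(k,l). if k = i then A $$ (i,l) + c * A $$ (j,l) else A $$ (k,l))"

definition col_op :: "'a::ring_1 \<Rightarrow> nat \<Rightarrow> nat \<Rightarrow> 'a mat \<Rightarrow> 'a mat" where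
  "col_op c i j A = mat (dim_row A) (dim_col A)
     (\<lambda>(k,l). if l = i then A $$ (k,i) + A $$ (k,j) * c else A $$ (k,l))"

definition elem_step :: "nat \<Rightarrow> 'a::ring_1 mat \<Rightarrow> 'a mat \<Rightarrow> bool" where
  "elem_step n A B \<longleftrightarrow> (\<exists>c i j. i < n \<and> j < n \<and> i \<noteq> j \<and>
       (B = row_op c i j A \<or> B = col_op c i j A))"

end

theory Submission
  imports Defs
begin

text \<open>
  Let u be the first row of A and x a right inverse column,
  so that \<open>\<Sum> u\<^sub>j x\<^sub>j = 1\<close>. Applying the exchange property inside the corner ring of the last
  idempotent of a complete family of orthogonal idempotents, and each time replacing \<open>u\<^sub>k\<close> by
  \<open>f\<^sub>k u\<^sub>k\<close> (the difference lies in the right ideal of the other entries), we reach a first row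
  with \<open>f\<^sub>i u\<^sub>j = \<delta>\<^sub>i\<^sub>j u\<^sub>j\<close>. For a right inverse X of that matrix, \<open>u\<^sub>i X\<^sub>i\<^sub>l = \<delta>\<^sub>l\<^sub>0 f\<^sub>i\<close>, so the
  \<open>g\<^sub>j = X\<^sub>j\<^sub>0 u\<^sub>j\<close> are idempotents with \<open>u\<^sub>j g\<^sub>j = u\<^sub>j\<close>, and a telescoping sum of column operations
  turns the corner entry into \<open>d = u\<^sub>0 g\<^sub>1 \<cdots> g\<^sub>n\<^sub>-\<^sub>1\<close>. One more exchange step, applied to
  \<open>d X'\<^sub>0\<^sub>0\<close>, gives an idempotent \<open>e = d s\<close> and the corner entry \<open>e d\<close>, which is regular with
  \<open>e d R = e R\<close> and \<open>R e d = R s e d\<close>. The ideal generated by \<open>1 - e\<close> is R because \<open>(1 - f\<^sub>0) e = 0\<close>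
  while \<open>e \<in> R (1 - f\<^sub>0) R\<close>. For \<open>q = 1 - s e d\<close>, membership of \<open>d v\<close> in RqR forces that of v;
  peeling off the idempotent factors of d puts every \<open>1 - g\<^sub>j\<close>, hence the whole column 1 of X, into
  RqR, and the second row of the matrix combines that column to 1.
\<close>

section \<open>Two-sided ideals\<close>

lemma two_sided_ideal_self: "p \<in> two_sided_ideal p"
  unfolding two_sided_ideal_def
  by (rule CollectI, rule exI[of _ 1], rule exI[of _ "\<lambda>_. 1"], rule exI[of _ "\<lambda>_. 1"]) simp

lemma two_sided_ideal_zero: "0 \<in> two_sided_ideal p"
  unfolding two_sided_ideal_def by (rule CollectI, rule exI[of _ 0]) simp

lemma two_sided_ideal_mult_left:
  assumes "x \<in> two_sided_ideal p"
  shows "a * x \<in> two_sided_ideal p"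
proof -
  obtain m :: nat and r s where "x = (\<Sum>i<m. r i * p * s i)"
    using assms unfolding two_sided_ideal_def by blast
  then have "a * x = (\<Sum>i<m. (a * r i) * p * s i)"
    by (simp add: sum_distrib_left mult.assoc)
  then show ?thesis
    unfolding two_sided_ideal_def by (intro CollectI exI[of _ m] exI[of _ "\<lambda>i. a * r i"] exI[of _ s])
qed

lemma two_sided_ideal_mult_right:
  assumes "x \<in> two_sided_ideal p"
  shows "x * a \<in> two_sided_ideal p"
proof -
  obtain m :: nat and r s where "x = (\<Sum>i<m. r i * p * s i)"
    using assms unfolding two_sided_ideal_def by blast
  then have "x * a = (\<Sum>i<m. r i * p * (s i * a))"
    by (simp add: sum_distrib_right mult.assoc)
  then show ?thesis
    unfolding two_sided_ideal_def by (intro CollectI exI[of _ m] exI[of _ r] exI[of _ "\<lambda>i. s i * a"])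
qed

lemma two_sided_ideal_add:
  assumes "x \<in> two_sided_ideal p" and "y \<in> two_sided_ideal p"
  shows "x + y \<in> two_sided_ideal p"
proof -
  obtain m :: nat and r s where x: "x = (\<Sum>i<m. r i * p * s i)"
    using assms(1) unfolding two_sided_ideal_def by blast
  obtain m' :: nat and r' s' where y: "y = (\<Sum>i<m'. r' i * p * s' i)"
    using assms(2) unfolding two_sided_ideal_def by blast
  define R where "R i = (if i < m then r i else r' (i - m))" for i
  define S where "S i = (if i < m then s i else s' (i - m))" for i
  have "(\<Sum>i<m + m'. R i * p * S i) = (\<Sum>i<m. R i * p * S i) + (\<Sum>i<m'. R (m + i) * p * S (m + i))"
    by (induction m') (simp_all add: add_ac)
  also have "\<dots> = x + y"
    unfolding x y R_def S_def by simp
  finally show ?thesis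
    unfolding two_sided_ideal_def by (intro CollectI exI) (rule sym)
qed

lemma two_sided_ideal_diff:
  assumes "x \<in> two_sided_ideal p" and "y \<in> two_sided_ideal p"
  shows "x - y \<in> two_sided_ideal p"
  using two_sided_ideal_add[OF assms(1) two_sided_ideal_mult_left[OF assms(2), of "-1"]] by simp

lemma two_sided_ideal_sum:
  "(\<And>i. i \<in> I \<Longrightarrow> x i \<in> two_sided_ideal p) \<Longrightarrow> (\<Sum>i\<in>I. x i) \<in> two_sided_ideal p"
  by (induction I rule: infinite_finite_induct) (simp_all add: two_sided_ideal_zero two_sided_ideal_add)

lemma two_sided_ideal_eq_UNIV: "1 \<in> two_sided_ideal p \<Longrightarrow> two_sided_ideal p = UNIV"
  using two_sided_ideal_mult_left[of 1 p] by auto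

lemma two_sided_ideal_one_minus_eq_UNIV:
  fixes e h :: "'a::ring_1"
  assumes "h * e = 0" and "e = a * h * b"
  shows "two_sided_ideal (1 - e) = UNIV"
proof (rule two_sided_ideal_eq_UNIV)
  have "e = a * (h * (1 - e)) * b"
    using assms by (simp add: algebra_simps)
  also have "\<dots> \<in> two_sided_ideal (1 - e)"
    by (intro two_sided_ideal_mult_right two_sided_ideal_mult_left two_sided_ideal_self)
  finally have "(1 - e) + e \<in> two_sided_ideal (1 - e)"
    by (intro two_sided_ideal_add two_sided_ideal_self)
  then show "1 \<in> two_sided_ideal (1 - e)"
    by simp
qed

lemma one_minus_prod_list_mem_two_sided_ideal:
  "\<forall>g\<in>set gs. 1 - g \<in> two_sided_ideal q \<Longrightarrow> 1 - prod_list gs \<in> two_sided_ideal q"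
proof (induction gs)
  case Nil
  then show ?case by (simp add: two_sided_ideal_zero)
next
  case (Cons g gs)
  have "1 - prod_list (g # gs) = (1 - g) + g * (1 - prod_list gs)"
    by (simp add: algebra_simps)
  also have "\<dots> \<in> two_sided_ideal q"
    using Cons by (intro two_sided_ideal_add two_sided_ideal_mult_left) auto
  finally show ?case .
qed

lemma one_minus_idempotent_factors_mem_two_sided_ideal:
  fixes c :: "'a::ring_1"
  assumes "\<forall>g\<in>set gs. g * g = g"
    and "\<And>v. c * prod_list gs * v \<in> two_sided_ideal q \<Longrightarrow> v \<in> two_sided_ideal q"
  shows "\<forall>g\<in>set gs. 1 - g \<in> two_sided_ideal q"
  using assms
proof (induction gs rule: rev_induct)
  case Nil
  then show ?case by simp
next
  case (snoc g gs)
  let ?P = "prod_list gs"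
  have "c * prod_list (gs @ [g]) * (1 - g) = c * ?P * (g - g * g)"
    by (simp add: algebra_simps mult.assoc)
  then have g: "1 - g \<in> two_sided_ideal q"
    using snoc.prems by (simp add: two_sided_ideal_zero)
  have cancel: "v \<in> two_sided_ideal q" if "c * ?P * v \<in> two_sided_ideal q" for v
  proof -
    have "c * prod_list (gs @ [g]) * v = c * ?P * v - c * ?P * ((1 - g) * v)"
      by (simp add: algebra_simps mult.assoc)
    then have "c * prod_list (gs @ [g]) * v \<in> two_sided_ideal q"
      using that g by (simp add: two_sided_ideal_diff two_sided_ideal_mult_left two_sided_ideal_mult_right)
    then show ?thesis using snoc.prems(2) by blast
  qed
  have "\<forall>h\<in>set gs. 1 - h \<in> two_sided_ideal q"
    using snoc.IH[OF _ cancel] snoc.prems(1) by simp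
  with g show ?case by simp
qed

section \<open>Idempotents in exchange rings\<close>

lemma one_minus_idempotent:
  fixes e :: "'a::ring_1"
  shows "e * e = e \<Longrightarrow> (1 - e) * (1 - e) = 1 - e"
  by (simp add: algebra_simps)

lemma range_mult_left_eqI:
  fixes a b :: "'a::ring_1"
  assumes "a = b * x" and "b = a * y"
  shows "range (\<lambda>r. a * r) = range (\<lambda>r. b * r)"
proof -
  have "a * r = b * (x * r)" for r
    using assms(1) by (simp add: mult.assoc)
  moreover have "b * r = a * (y * r)" for r
    using assms(2) by (simp add: mult.assoc)
  ultimately show ?thesis
    unfolding image_def by blast
qed

lemma range_mult_right_eqI:
  fixes a b :: "'a::ring_1"
  assumes "a = x * b" and "b = y * a"
  shows "range (\<lambda>r. r * a) = range (\<lambda>r. r * b)"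
proof -
  have "r * a = (r * x) * b" for r
    using assms(1) by (simp add: mult.assoc)
  moreover have "r * b = (r * y) * a" for r
    using assms(2) by (simp add: mult.assoc)
  ultimately show ?thesis
    unfolding image_def by blast
qed

lemma regular_idempotent_mult:
  fixes d e s :: "'a::ring_1"
  assumes e: "e * e = e" and es: "e = d * s"
  shows "regular_elem (e * d)" "s * (e * d) * (s * (e * d)) = s * (e * d)"
    "range (\<lambda>r. e * d * r) = range (\<lambda>r. e * r)"
    "range (\<lambda>r. r * (e * d)) = range (\<lambda>r. r * (s * (e * d)))"
proof -
  have eds: "e * d * s = e"
    using e es by (simp add: mult.assoc)
  then have edsed: "e * d * s * (e * d) = e * d"
    using e by (simp add: mult.assoc[symmetric])
  then show "regular_elem (e * d)"
    unfolding regular_elem_def by blast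
  show "s * (e * d) * (s * (e * d)) = s * (e * d)"
    using edsed by (simp add: mult.assoc)
  show "range (\<lambda>r. e * d * r) = range (\<lambda>r. e * r)"
    using eds by (intro range_mult_left_eqI[of _ _ d s]) (simp_all add: mult.assoc)
  show "range (\<lambda>r. r * (e * d)) = range (\<lambda>r. r * (s * (e * d)))"
    using edsed by (intro range_mult_right_eqI[of _ "e * d" _ s]) (simp_all add: mult.assoc)
qed

lemma exchange_ringD:
  fixes a :: "'a::ring_1"
  assumes "exchange_ring TYPE('a)"
  obtains e r s where "e * e = e" "e = a * r" "1 - e = (1 - a) * s"
  using assms unfolding exchange_ring_def by blast

lemma exchange_split_idempotent:
  fixes g a w :: "'a::ring_1"
  assumes ex: "exchange_ring TYPE('a)" and g: "g * g = g" and aw: "a + w = 1"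
  obtains e e' where "e * e = e" "e' * e' = e'" "e * e' = 0" "e' * e = 0" "e + e' = g"
    "\<exists>t. e = g * a * t" "\<exists>t. e' = g * w * t"
proof -
  \<comment> \<open>exchange in the corner ring gRg, applied to the element \<open>g a g + (1 - g)\<close>\<close>
  obtain f r s where f: "f * f = f" and fr: "f = (g * a * g + (1 - g)) * r"
    and fs: "1 - f = (1 - (g * a * g + (1 - g))) * s"
    using exchange_ringD[OF ex] .
  define h where "h = 1 - f"
  have "g * a * g + g * w * g = g"
    using aw g by (metis distrib_left distrib_right mult_1_right)
  then have "1 - (g * a * g + (1 - g)) = g * w * g"
    by (simp add: algebra_simps)
  then have h: "h = g * w * g * s"
    using fs unfolding h_def by simp
  have gh: "g * h = h"
    unfolding h by (simp add: g mult.assoc[symmetric])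
  have hh: "h * h = h" and fh: "f * h = 0" and hf: "h * f = 0"
    unfolding h_def by (simp_all add: algebra_simps f)
  have gf: "g * f = g - h"
    using gh unfolding h_def by (simp add: algebra_simps)
  \<comment> \<open>the same identities with a right factor, matching the normal form of \<open>algebra_simps\<close>\<close>
  have assoc: "g * (g * x) = g * x" "f * (f * x) = f * x" "h * (h * x) = h * x" "f * (h * x) = 0" "h * (f * x) = 0"
    "g * (h * x) = h * x" "g * (f * x) = g * x - h * x" for x
    by (simp_all add: mult.assoc[symmetric] g f hh fh hf gh gf left_diff_distrib)
  show thesis
  proof
    show "f * g * (f * g) = f * g" "h * g * (h * g) = h * g"
      "f * g * (h * g) = 0" "h * g * (f * g) = 0" "f * g + h * g = g"
      by (simp_all add: algebra_simps assoc g h_def)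
    have "f * g = g * f * g"
      by (simp add: algebra_simps assoc g h_def)
    also have "\<dots> = g * a * (g * r * g)"
      unfolding fr by (simp add: algebra_simps assoc g)
    finally show "\<exists>t. f * g = g * a * t" ..
    have "h * g = g * w * (g * s * g)"
      unfolding h by (simp add: mult.assoc)
    then show "\<exists>t. h * g = g * w * t" ..
  qed
qed

definition orthogonal_idempotents :: "(nat \<Rightarrow> 'a::ring_1) \<Rightarrow> nat set \<Rightarrow> bool" where
  "orthogonal_idempotents f I \<longleftrightarrow> (\<forall>i\<in>I. \<forall>j\<in>I. f i * f j = (if i = j then f i else 0))"

lemma orthogonal_idempotents_refine:
  fixes f :: "nat \<Rightarrow> 'a::ring_1"
  assumes f: "orthogonal_idempotents f I" and i: "i \<in> I" and j: "j \<notin> I"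
    and e: "e * e = e" "e' * e' = e'" "e * e' = 0" "e' * e = 0" "e + e' = f i"
  shows "orthogonal_idempotents (f(i := e, j := e')) (insert j I)"
proof -
  have ef: "e * f i = e" "e' * f i = e'" "f i * e = e" "f i * e' = e'"
    using e by (simp_all flip: e(5) add: algebra_simps)
  have orth: "f a * f b = (if a = b then f a else 0)" if "a \<in> I" "b \<in> I" for a b
    using f that unfolding orthogonal_idempotents_def by blast
  have cross: "e * f k = 0 \<and> e' * f k = 0 \<and> f k * e = 0 \<and> f k * e' = 0" if "k \<in> I" "k \<noteq> i" for k
  proof -
    have "f i * f k = 0" "f k * f i = 0"
      using orth[OF i that(1)] orth[OF that(1) i] that(2) by auto
    then show ?thesis
      by (metis ef mult.assoc mult_zero_left mult_zero_right)
  qed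
  have "i \<noteq> j"
    using i j by blast
  show ?thesis
    unfolding orthogonal_idempotents_def
  proof (intro ballI)
    fix a b assume a: "a \<in> insert j I" and b: "b \<in> insert j I"
    show "(f(i := e, j := e')) a * (f(i := e, j := e')) b = (if a = b then (f(i := e, j := e')) a else 0)"
    proof (cases "a \<in> {i, j}"; cases "b \<in> {i, j}")
      assume "a \<in> {i, j}" "b \<in> {i, j}"
      then show ?thesis using \<open>i \<noteq> j\<close> e(1-4) by auto
    next
      assume "a \<in> {i, j}" "b \<notin> {i, j}"
      then show ?thesis using b \<open>i \<noteq> j\<close> cross[of b] by auto
    next
      assume "a \<notin> {i, j}" "b \<in> {i, j}"
      then show ?thesis using a \<open>i \<noteq> j\<close> cross[of a] by auto
    next
      assume "a \<notin> {i, j}" "b \<notin> {i, j}"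
      then show ?thesis using a b orth[of a b] by auto
    qed
  qed
qed

definition right_span :: "(nat \<Rightarrow> 'a::ring_1) \<Rightarrow> nat set \<Rightarrow> 'a set" where
  "right_span u J = {x. \<exists>c. x = (\<Sum>j\<in>J. u j * c j)}"

lemma right_span_add:
  assumes "x \<in> right_span u J" and "y \<in> right_span u J"
  shows "x + y \<in> right_span u J"
proof -
  obtain c d where "x = (\<Sum>j\<in>J. u j * c j)" and "y = (\<Sum>j\<in>J. u j * d j)"
    using assms unfolding right_span_def by blast
  then have "x + y = (\<Sum>j\<in>J. u j * (c j + d j))"
    by (simp add: sum.distrib distrib_left)
  then show ?thesis
    unfolding right_span_def by (intro CollectI exI[of _ "\<lambda>j. c j + d j"])
qed

lemma right_span_mult_right:
  assumes "x \<in> right_span u J"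
  shows "x * a \<in> right_span u J"
proof -
  obtain c where "x = (\<Sum>j\<in>J. u j * c j)"
    using assms unfolding right_span_def by blast
  then have "x * a = (\<Sum>j\<in>J. u j * (c j * a))"
    by (simp add: sum_distrib_right mult.assoc)
  then show ?thesis
    unfolding right_span_def by (intro CollectI exI[of _ "\<lambda>j. c j * a"])
qed

lemma right_span_diff:
  "x \<in> right_span u J \<Longrightarrow> y \<in> right_span u J \<Longrightarrow> x - y \<in> right_span u J"
  using right_span_add[of x u J "y * -1"] right_span_mult_right[of y u J "-1"] by simp

lemma right_span_generator:
  assumes "finite J" and "j \<in> J"
  shows "u j * y \<in> right_span u J"
proof -
  have "u j * y = (\<Sum>i\<in>J. u i * (if i = j then y else 0))"
    using assms by (simp add: if_distrib[of "\<lambda>x. u _ * x"] sum.delta cong: if_cong)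
  then show ?thesis
    unfolding right_span_def by (intro CollectI exI[of _ "\<lambda>i. if i = j then y else 0"])
qed

lemma right_span_sum:
  "(\<And>i. i \<in> I \<Longrightarrow> x i \<in> right_span u J) \<Longrightarrow> (\<Sum>i\<in>I. x i) \<in> right_span u J"
proof (induction I rule: infinite_finite_induct)
  case (infinite I)
  then show ?case
    unfolding right_span_def by (auto intro: exI[of _ "\<lambda>_. 0"])
next
  case empty
  then show ?case
    unfolding right_span_def by (auto intro: exI[of _ "\<lambda>_. 0"])
next
  case (insert i I)
  then show ?case by (simp add: right_span_add)
qed

lemma exchange_refine_by_unimodular_row:
  fixes u x f :: "nat \<Rightarrow> 'a::ring_1"
  assumes ex: "exchange_ring TYPE('a)"
    and f: "orthogonal_idempotents f {..k}" and f_sum: "(\<Sum>i\<le>k. f i) = 1"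
    and f_span: "\<And>i. i < k \<Longrightarrow> \<exists>r. f i = u i * r"
    and k: "k < n" and ux: "(\<Sum>j<n. u j * x j) = 1"
  obtains e e' where "e * e = e" "e' * e' = e'" "e * e' = 0" "e' * e = 0" "e + e' = f k"
    "\<exists>t. e = f k * u k * t" "1 - e \<in> right_span u ({..<n} - {k})"
proof -
  let ?J = "{..<n} - {k}"
  define w where "w = (\<Sum>j\<in>?J. u j * x j)"
  have aw: "u k * x k + w = 1"
    using ux k unfolding w_def by (simp add: sum.remove[of "{..<n}" k])
  have "f k * f k = f k"
    using f unfolding orthogonal_idempotents_def by simp
  then obtain e e' where e: "e * e = e" "e' * e' = e'" "e * e' = 0" "e' * e = 0" "e + e' = f k"
    and e_in: "\<exists>t. e = f k * (u k * x k) * t" and e'_in: "\<exists>t. e' = f k * w * t"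
    using aw by (rule exchange_split_idempotent[OF ex])
  have "1 - f k = (\<Sum>i<k. f i)"
    using f_sum by (simp add: lessThan_Suc_atMost[symmetric] algebra_simps)
  also have "\<dots> \<in> right_span u ?J"
  proof (rule right_span_sum)
    fix i assume "i \<in> {..<k}"
    then obtain r where "f i = u i * r" and "i \<in> ?J"
      using f_span k by auto
    then show "f i \<in> right_span u ?J"
      by (simp add: right_span_generator)
  qed
  finally have fk: "1 - f k \<in> right_span u ?J" .
  have w: "w \<in> right_span u ?J"
    unfolding w_def by (intro right_span_sum right_span_generator) auto
  have "f k * w = w - (1 - f k) * w"
    by (simp add: algebra_simps)
  then have "f k * w \<in> right_span u ?J"
    using right_span_diff[OF w right_span_mult_right[OF fk]] by simp
  then have "e' \<in> right_span u ?J"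
    using e'_in right_span_mult_right by blast
  moreover have "1 - e = (1 - f k) + e'"
    using e(5) by (simp add: algebra_simps)
  ultimately have "1 - e \<in> right_span u ?J"
    using right_span_add[OF fk] by metis
  moreover have "\<exists>t. e = f k * u k * t"
    using e_in by (metis mult.assoc)
  ultimately show thesis
    using that e by blast
qed

section \<open>Elementary column operations\<close>

definition col_step :: "nat \<Rightarrow> 'a::ring_1 mat \<Rightarrow> 'a mat \<Rightarrow> bool" where
  "col_step n A B \<longleftrightarrow> (\<exists>c i j. i < n \<and> j < n \<and> i \<noteq> j \<and> B = col_op c i j A)"

lemma col_steps_imp_elem_steps: "(col_step n)\<^sup>*\<^sup>* A B \<Longrightarrow> (elem_step n)\<^sup>*\<^sup>* A B"
  by (rule mono_rtranclp[rule_format, of "col_step n"]) (auto simp: col_step_def elem_step_def)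

lemma col_op_dim [simp]:
  "dim_row (col_op c i j A) = dim_row A" "dim_col (col_op c i j A) = dim_col A"
  unfolding col_op_def by simp_all

lemma col_op_carrier: "A \<in> carrier_mat n m \<Longrightarrow> col_op c i j A \<in> carrier_mat n m"
  unfolding carrier_mat_def by simp

lemma col_op_index:
  "k < dim_row A \<Longrightarrow> l < dim_col A \<Longrightarrow>
   col_op c i j A $$ (k, l) = (if l = i then A $$ (k, i) + A $$ (k, j) * c else A $$ (k, l))"
  unfolding col_op_def by simp

lemma mult_mat_index_sum:
  assumes "A \<in> carrier_mat n n" "X \<in> carrier_mat n n" "r < n" "l < n"
  shows "(A * X) $$ (r, l) = (\<Sum>j<n. A $$ (r, j) * X $$ (j, l))"
  using assms by (simp add: scalar_prod_def atLeast0LessThan)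

lemma mult_mat_eq_one_index_sum:
  assumes "A \<in> carrier_mat n n" "X \<in> carrier_mat n n" "A * X = 1\<^sub>m n" "r < n" "l < n"
  shows "(\<Sum>j<n. A $$ (r, j) * X $$ (j, l)) = (if r = l then 1 else 0)"
  using mult_mat_index_sum[OF assms(1,2,4,5)] assms(3-5) by simp

lemma invertible_mat_right_inverse:
  fixes A :: "'a::ring_1 mat"
  assumes A: "A \<in> carrier_mat n n" and "invertible_mat A"
  obtains X where "X \<in> carrier_mat n n" "A * X = 1\<^sub>m n"
proof -
  obtain X where AX: "A * X = 1\<^sub>m (dim_row A)" and XA: "X * A = 1\<^sub>m (dim_row X)"
    using assms(2) unfolding invertible_mat_def inverts_mat_def by blast
  have "dim_col X = n" "dim_row X = n"
    using arg_cong[OF AX, of dim_col] arg_cong[OF XA, of dim_col] A by auto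
  then show thesis
    using that AX A by auto
qed

lemma col_op_eq_mult:
  fixes A :: "'a::ring_1 mat"
  assumes A: "A \<in> carrier_mat n n" and i: "i < n" and j: "j < n"
  shows "col_op c i j A = A * col_op c i j (1\<^sub>m n)"
proof (rule eq_matI)
  fix k l assume "k < dim_row (A * col_op c i j (1\<^sub>m n))" "l < dim_col (A * col_op c i j (1\<^sub>m n))"
  then have k: "k < n" and l: "l < n"
    using A by auto
  have E: "col_op c i j (1\<^sub>m n) \<in> carrier_mat n n"
    by (simp add: col_op_carrier)
  have "(A * col_op c i j (1\<^sub>m n)) $$ (k, l) = (\<Sum>m<n. A $$ (k, m) * col_op c i j (1\<^sub>m n) $$ (m, l))"
    by (rule mult_mat_index_sum[OF A E k l])
  also have "\<dots> = (\<Sum>m<n. A $$ (k, m) * (if l = i then (if m = i then 1 else 0) + (if m = j then 1 else 0) * c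
                                else (if m = l then 1 else 0)))"
    using l i j by (intro sum.cong) (auto simp: col_op_index)
  also have "\<dots> = (if l = i then A $$ (k, i) + A $$ (k, j) * c else A $$ (k, l))"
    using i j l by (simp add: distrib_left sum.distrib mult.assoc[symmetric] sum_distrib_right[symmetric]
        if_distrib[of "\<lambda>x. A $$ (k, _) * x"] sum.delta' cong: if_cong)
  finally show "col_op c i j A $$ (k, l) = (A * col_op c i j (1\<^sub>m n)) $$ (k, l)"
    using A k l by (simp add: col_op_index)
qed (use A in auto)

lemma col_op_right_inverse:
  fixes A X :: "'a::ring_1 mat"
  assumes A: "A \<in> carrier_mat n n" and X: "X \<in> carrier_mat n n" and AX: "A * X = 1\<^sub>m n"
    and ij: "i < n" "j < n" "i \<noteq> j"
  shows "col_op c i j A * (col_op (- c) i j (1\<^sub>m n) * X) = 1\<^sub>m n"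
proof -
  let ?E = "col_op c i j (1\<^sub>m n) :: 'a mat" and ?E' = "col_op (- c) i j (1\<^sub>m n) :: 'a mat"
  have E: "?E \<in> carrier_mat n n" "?E' \<in> carrier_mat n n"
    by (simp_all add: col_op_carrier)
  have "?E * ?E' = col_op (- c) i j ?E"
    using col_op_eq_mult[OF E(1) ij(1,2)] by simp
  also have "\<dots> = 1\<^sub>m n"
    using ij by (intro eq_matI) (auto simp: col_op_index)
  finally have EE': "?E * ?E' = 1\<^sub>m n" .
  have "col_op c i j A * (?E' * X) = A * ((?E * ?E') * X)"
    using A X E by (simp add: col_op_eq_mult[OF A ij(1,2)] assoc_mult_mat[of _ n n _ n _ n])
  then show ?thesis
    using EE' AX X by simp
qed

lemma col_steps_right_inverse:
  fixes A B X :: "'a::ring_1 mat"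
  assumes "(col_step n)\<^sup>*\<^sup>* A B" and "A \<in> carrier_mat n n" "X \<in> carrier_mat n n" "A * X = 1\<^sub>m n"
  obtains Y where "B \<in> carrier_mat n n" "Y \<in> carrier_mat n n" "B * Y = 1\<^sub>m n"
  using assms(1)
proof (induction arbitrary: thesis rule: rtranclp_induct)
  case base
  then show ?case using assms(2-4) by blast
next
  case (step B C)
  obtain Y where B: "B \<in> carrier_mat n n" and Y: "Y \<in> carrier_mat n n" and BY: "B * Y = 1\<^sub>m n"
    using step.IH by blast
  obtain c i j where ij: "i < n" "j < n" "i \<noteq> j" and C: "C = col_op c i j B"
    using step.hyps(2) unfolding col_step_def by blast
  have "col_op (- c) i j (1\<^sub>m n) * Y \<in> carrier_mat n n"
    using mult_carrier_mat[OF col_op_carrier[OF one_carrier_mat] Y] .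
  then show ?case
    using step.prems B col_op_right_inverse[OF B Y BY ij] col_op_carrier[OF B] unfolding C by auto
qed

lemma col_steps_add_cols:
  fixes A :: "'a::ring_1 mat"
  assumes A: "A \<in> carrier_mat n n" and k: "k < n" and J: "J \<subseteq> {..<n}" "k \<notin> J"
  shows "(col_step n)\<^sup>*\<^sup>* A
    (mat n n (\<lambda>(r, l). if l = k then A $$ (r, k) + (\<Sum>j\<in>J. A $$ (r, j) * c j) else A $$ (r, l)))"
proof -
  have "finite J"
    using J(1) by (rule finite_subset) simp
  then show ?thesis
    using J
  proof (induction J rule: finite_induct)
    case empty
    have id: "mat n n (\<lambda>(r, l). if l = k then A $$ (r, k) + (\<Sum>j\<in>{}. A $$ (r, j) * c j) else A $$ (r, l)) = A"
      using A by (intro eq_matI) auto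
    show ?case
      unfolding id ..
  next
    case (insert j J)
    let ?M = "mat n n (\<lambda>(r, l). if l = k then A $$ (r, k) + (\<Sum>j\<in>J. A $$ (r, j) * c j) else A $$ (r, l))"
    have j: "j < n" "j \<noteq> k"
      using insert.prems by auto
    have IH: "(col_step n)\<^sup>*\<^sup>* A ?M"
      using insert.IH insert.prems by simp
    have step: "col_step n ?M (col_op (c j) k j ?M)"
      unfolding col_step_def using j k by blast
    have eq: "col_op (c j) k j ?M
      = mat n n (\<lambda>(r, l). if l = k then A $$ (r, k) + (\<Sum>j\<in>insert j J. A $$ (r, j) * c j) else A $$ (r, l))"
      using j insert.hyps by (intro eq_matI) (auto simp: col_op_index add.assoc add.commute)
    show ?case
      unfolding eq[symmetric] using IH step by (rule rtranclp.rtrancl_into_rtrancl)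
  qed
qed

lemma col_steps_add_col_multiples:
  fixes A :: "'a::ring_1 mat"
  assumes A: "A \<in> carrier_mat n n" and s: "s < n" and J: "J \<subseteq> {..<n}" "s \<notin> J"
  shows "(col_step n)\<^sup>*\<^sup>* A
    (mat n n (\<lambda>(r, l). if l \<in> J then A $$ (r, l) + A $$ (r, s) * c l else A $$ (r, l)))"
proof -
  have "finite J"
    using J(1) by (rule finite_subset) simp
  then show ?thesis
    using J
  proof (induction J rule: finite_induct)
    case empty
    have id: "mat n n (\<lambda>(r, l). if l \<in> {} then A $$ (r, l) + A $$ (r, s) * c l else A $$ (r, l)) = A"
      using A by (intro eq_matI) auto
    show ?case
      unfolding id ..
  next
    case (insert j J)
    let ?M = "mat n n (\<lambda>(r, l). if l \<in> J then A $$ (r, l) + A $$ (r, s) * c l else A $$ (r, l))"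
    have j: "j < n" "j \<noteq> s"
      using insert.prems by auto
    have IH: "(col_step n)\<^sup>*\<^sup>* A ?M"
      using insert.IH insert.prems by simp
    have step: "col_step n ?M (col_op (c j) j s ?M)"
      unfolding col_step_def using j s by blast
    have eq: "col_op (c j) j s ?M
      = mat n n (\<lambda>(r, l). if l \<in> insert j J then A $$ (r, l) + A $$ (r, s) * c l else A $$ (r, l))"
      using j s insert.hyps insert.prems by (intro eq_matI) (auto simp: col_op_index)
    show ?case
      unfolding eq[symmetric] using IH step by (rule rtranclp.rtrancl_into_rtrancl)
  qed
qed

lemma col_steps_add_right_span:
  fixes A :: "'a::ring_1 mat"
  assumes A: "A \<in> carrier_mat n n" and k: "k < n"
    and v: "v \<in> right_span (\<lambda>j. A $$ (0, j)) ({..<n} - {k})"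
  obtains B where "(col_step n)\<^sup>*\<^sup>* A B" "B \<in> carrier_mat n n" "B $$ (0, k) = A $$ (0, k) + v"
    "\<And>l. l < n \<Longrightarrow> l \<noteq> k \<Longrightarrow> B $$ (0, l) = A $$ (0, l)"
proof -
  obtain c where c: "v = (\<Sum>j\<in>{..<n} - {k}. A $$ (0, j) * c j)"
    using v unfolding right_span_def by blast
  let ?B = "mat n n (\<lambda>(r, l). if l = k then A $$ (r, k) + (\<Sum>j\<in>{..<n} - {k}. A $$ (r, j) * c j) else A $$ (r, l))"
  show thesis
  proof (rule that)
    show "(col_step n)\<^sup>*\<^sup>* A ?B"
      by (rule col_steps_add_cols[OF A k]) auto
    show "?B \<in> carrier_mat n n"
      by simp
    show "?B $$ (0, k) = A $$ (0, k) + v"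
      using k c by simp
    show "?B $$ (0, l) = A $$ (0, l)" if "l < n" "l \<noteq> k" for l
      using that k by simp
  qed
qed

section \<open>Rows split by orthogonal idempotents\<close>

locale split_first_row =
  fixes n :: nat and u :: "nat \<Rightarrow> 'a::ring_1" and x :: "nat \<Rightarrow> nat \<Rightarrow> 'a" and f :: "nat \<Rightarrow> 'a"
  assumes right_inverse: "\<And>l. l < n \<Longrightarrow> (\<Sum>j<n. u j * x j l) = (if l = 0 then 1 else 0)"
    and split: "\<And>i j. i < n \<Longrightarrow> j < n \<Longrightarrow> f i * u j = (if i = j then u j else 0)"
begin

lemma mult_right_inverse_entry:
  assumes i: "i < n" and l: "l < n"
  shows "u i * x i l = (if l = 0 then f i else 0)"
proof -
  have "f i * (\<Sum>j<n. u j * x j l) = (\<Sum>j<n. (f i * u j) * x j l)"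
    by (simp add: sum_distrib_left mult.assoc)
  also have "\<dots> = u i * x i l"
    using i by (simp add: split if_distrib[of "\<lambda>y. y * _"] sum.delta cong: if_cong)
  finally show ?thesis
    using right_inverse[OF l] by (cases "l = 0") auto
qed

definition g :: "nat \<Rightarrow> 'a" where
  "g j = x j 0 * u j"

lemma g_idempotent: "j < n \<Longrightarrow> g j * g j = g j"
  unfolding g_def using mult_right_inverse_entry[of j 0] split[of j j]
  by (simp add: mult.assoc) (metis mult.assoc)

lemma mult_g: "j < n \<Longrightarrow> u j * g j = u j"
  unfolding g_def using mult_right_inverse_entry[of j 0] split[of j j]
  by (simp add: mult.assoc[symmetric])

lemma complement_two_sided_ideal_eq_UNIV:
  assumes n: "2 \<le> n" and e: "e = u 0 * prod_list (map g [1..<n]) * s"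
  shows "two_sided_ideal (1 - e) = UNIV"
proof (rule two_sided_ideal_one_minus_eq_UNIV)
  let ?h = "1 - f 0"
  have "?h * u 0 = 0"
    using split[of 0 0] n by (simp add: algebra_simps)
  then show "?h * e = 0"
    unfolding e by (simp add: mult.assoc[symmetric])
  have "?h * (u 1 * y) = u 1 * y" for y
    using split[of 0 1] n by (simp add: algebra_simps mult.assoc[symmetric])
  moreover have "[1..<n] = 1 # [2..<n]"
    using n by (simp add: upt_conv_Cons numeral_2_eq_2)
  ultimately show "e = (u 0 * x 1 0) * ?h * (u 1 * prod_list (map g [2..<n]) * s)"
    unfolding e g_def by (simp add: mult.assoc)
qed

lemma corner_two_sided_ideal_eq_UNIV:
  assumes n: "2 \<le> n" and a: "(\<Sum>k<n. a k * x k 1) = 1"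
    and d: "d = u 0 * prod_list (map g [1..<n])" and e: "e = d * s" "e * e = e"
  shows "two_sided_ideal (1 - s * (e * d)) = UNIV"
proof (rule two_sided_ideal_eq_UNIV)
  let ?I = "two_sided_ideal (1 - s * (e * d))"
  have cancel: "v \<in> ?I" if "d * v \<in> ?I" for v
  proof -
    have "v = (1 - s * (e * d)) * v + (s * e) * (d * v)"
      by (simp add: algebra_simps)
    then show ?thesis
      using two_sided_ideal_add[OF two_sided_ideal_mult_right[OF two_sided_ideal_self]
          two_sided_ideal_mult_left[OF that]] by metis
  qed
  have "\<forall>h\<in>set (map g [1..<n]). 1 - h \<in> ?I"
    using cancel g_idempotent d
    by (intro one_minus_idempotent_factors_mem_two_sided_ideal[where c = "u 0"]) auto
  then have g_I: "1 - g j \<in> ?I" if "1 \<le> j" "j < n" for j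
    using that by auto
  have P_I: "1 - prod_list (map g [1..<n]) \<in> ?I"
    by (rule one_minus_prod_list_mem_two_sided_ideal) (use g_I in auto)
  have "x k 1 \<in> ?I" if "k < n" for k
  proof (cases "k = 0")
    case True
    have "d * x 0 1 = (- u 0) * (1 - prod_list (map g [1..<n])) * x 0 1"
      using mult_right_inverse_entry[of 0 1] n unfolding d by (simp add: algebra_simps)
    also have "\<dots> \<in> ?I"
      by (intro two_sided_ideal_mult_right two_sided_ideal_mult_left P_I)
    finally show ?thesis
      using True cancel by simp
  next
    case False
    have "(1 - g k) * x k 1 = x k 1"
      using mult_right_inverse_entry[of k 1] n that unfolding g_def by (simp add: algebra_simps)
    moreover have "(1 - g k) * x k 1 \<in> ?I"
      using g_I[of k] that False by (simp add: two_sided_ideal_mult_right)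
    ultimately show ?thesis
      by simp
  qed
  then show "1 \<in> ?I"
    using a two_sided_ideal_sum[of "{..<n}" "\<lambda>k. a k * x k 1"] two_sided_ideal_mult_left by fastforce
qed

end

section \<open>Normalising the first row\<close>

text \<open>After k steps the first k entries are split off by \<open>f 0, \<dots>, f (k - 1)\<close>; the last member
  \<open>f k\<close> of the complete orthogonal family is the remainder that the next step refines.\<close>

lemma col_steps_split_first_row_upto:
  fixes A X :: "'a::ring_1 mat"
  assumes ex: "exchange_ring TYPE('a)" and A: "A \<in> carrier_mat n n" and X: "X \<in> carrier_mat n n"
    and AX: "A * X = 1\<^sub>m n"
  shows "k \<le> n \<Longrightarrow> \<exists>B f. (col_step n)\<^sup>*\<^sup>* A B \<and> orthogonal_idempotents f {..k} \<and> (\<Sum>i\<le>k. f i) = 1 \<and>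
    (\<forall>i<k. f i * B $$ (0, i) = B $$ (0, i) \<and> (\<exists>r. f i = B $$ (0, i) * r))"
proof (induction k)
  case 0
  have "orthogonal_idempotents (\<lambda>_. 1) {..0::nat}"
    unfolding orthogonal_idempotents_def by simp
  then show ?case
    by force
next
  case (Suc k)
  then obtain B f where AB: "(col_step n)\<^sup>*\<^sup>* A B" and f: "orthogonal_idempotents f {..k}"
    and f_sum: "(\<Sum>i\<le>k. f i) = 1"
    and f_row: "\<And>i. i < k \<Longrightarrow> f i * B $$ (0, i) = B $$ (0, i) \<and> (\<exists>r. f i = B $$ (0, i) * r)"
    by auto
  have k: "k < n"
    using Suc.prems by simp
  obtain Y where B: "B \<in> carrier_mat n n" and Y: "Y \<in> carrier_mat n n" and BY: "B * Y = 1\<^sub>m n"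
    using col_steps_right_inverse[OF AB A X AX] .
  let ?u = "\<lambda>j. B $$ (0, j)"
  have uY: "(\<Sum>j<n. ?u j * Y $$ (j, 0)) = 1"
    using mult_mat_eq_one_index_sum[OF B Y BY, of 0 0] k by simp
  have f_span: "\<exists>r. f i = ?u i * r" if "i < k" for i
    using f_row[OF that] by blast
  obtain e e' where e: "e * e = e" "e' * e' = e'" "e * e' = 0" "e' * e = 0" "e + e' = f k"
    and e_in: "\<exists>t. e = f k * ?u k * t" and e_span: "1 - e \<in> right_span ?u ({..<n} - {k})"
    by (rule exchange_refine_by_unimodular_row[OF ex f f_sum f_span k uY])
  obtain B' where BB': "(col_step n)\<^sup>*\<^sup>* B B'" and B'k: "B' $$ (0, k) = ?u k + (1 - e) * - ?u k"
    and B'l: "\<And>l. l < n \<Longrightarrow> l \<noteq> k \<Longrightarrow> B' $$ (0, l) = ?u l"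
    using col_steps_add_right_span[OF B k right_span_mult_right[OF e_span]] by blast
  have B'k': "B' $$ (0, k) = e * ?u k"
    using B'k by (simp add: algebra_simps)
  define f' where "f' = f(k := e, Suc k := e')"
  have "orthogonal_idempotents f' {..Suc k}"
    unfolding f'_def atMost_Suc using orthogonal_idempotents_refine[OF f _ _ e] by simp
  moreover have "(\<Sum>i\<le>Suc k. f' i) = 1"
    using f_sum e(5) by (simp add: f'_def atMost_Suc lessThan_Suc_atMost[symmetric] add.assoc)
  moreover have "f' i * B' $$ (0, i) = B' $$ (0, i) \<and> (\<exists>r. f' i = B' $$ (0, i) * r)" if "i < Suc k" for i
  proof (cases "i = k")
    case True
    obtain t where t: "e = f k * ?u k * t"
      using e_in by blast
    have "e * f k = e"
      using e by (simp flip: e(5) add: algebra_simps)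
    then have "e = B' $$ (0, k) * t"
      using e(1) t B'k' by (metis mult.assoc)
    then show ?thesis
      using True e(1) B'k' by (auto simp: f'_def mult.assoc[symmetric])
  next
    case False
    then show ?thesis
      using that f_row[of i] B'l[of i] k by (simp add: f'_def)
  qed
  ultimately show ?case
    using AB BB' by (meson rtranclp_trans)
qed

lemma col_steps_split_first_row:
  fixes A X :: "'a::ring_1 mat"
  assumes ex: "exchange_ring TYPE('a)" and A: "A \<in> carrier_mat n n" and X: "X \<in> carrier_mat n n"
    and AX: "A * X = 1\<^sub>m n"
  obtains B Y f where "(col_step n)\<^sup>*\<^sup>* A B" "B \<in> carrier_mat n n" "Y \<in> carrier_mat n n" "B * Y = 1\<^sub>m n"
    "split_first_row n (\<lambda>j. B $$ (0, j)) (\<lambda>j l. Y $$ (j, l)) f"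
proof -
  obtain B f where AB: "(col_step n)\<^sup>*\<^sup>* A B" and f: "orthogonal_idempotents f {..n}"
    and f_row: "\<And>i. i < n \<Longrightarrow> f i * B $$ (0, i) = B $$ (0, i)"
    using col_steps_split_first_row_upto[OF ex A X AX, of n] by auto
  obtain Y where B: "B \<in> carrier_mat n n" and Y: "Y \<in> carrier_mat n n" "B * Y = 1\<^sub>m n"
    using col_steps_right_inverse[OF AB A X AX] .
  have "f i * B $$ (0, j) = (if i = j then B $$ (0, j) else 0)" if "i < n" "j < n" for i j
  proof -
    have "f i * B $$ (0, j) = f i * f j * B $$ (0, j)"
      using f_row[OF that(2)] by (simp add: mult.assoc)
    then show ?thesis
      using f that f_row[OF that(2)] unfolding orthogonal_idempotents_def by auto
  qed
  then have "split_first_row n (\<lambda>j. B $$ (0, j)) (\<lambda>j l. Y $$ (j, l)) f"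
    by unfold_locales (use mult_mat_eq_one_index_sum[OF B Y] in auto)
  then show thesis
    using that AB B Y by blast
qed

lemma sum_prod_list_telescope:
  fixes g :: "nat \<Rightarrow> 'a::ring_1"
  assumes "1 \<le> m"
  shows "(\<Sum>j\<in>{1..<m}. prod_list (map g [1..<j]) * (1 - g j)) = 1 - prod_list (map g [1..<m])"
  using assms
proof (induction m rule: nat_induct_at_least)
  case base
  then show ?case by simp
next
  case (Suc m)
  then show ?case
    by (simp add: algebra_simps)
qed

lemma col_steps_first_entry_mult_prod_list:
  fixes A :: "'a::ring_1 mat"
  assumes A: "A \<in> carrier_mat n n" and n: "0 < n"
    and g: "\<And>j. 1 \<le> j \<Longrightarrow> j < n \<Longrightarrow> A $$ (0, j) * g j = A $$ (0, j)"
  obtains B where "(col_step n)\<^sup>*\<^sup>* A B" "B $$ (0, 0) = A $$ (0, 0) * prod_list (map g [1..<n])"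
proof -
  let ?u = "\<lambda>j. A $$ (0, j)" and ?P = "\<lambda>j. prod_list (map g [1..<j])"
  have J: "{..<n} - {0} = {1..<n}"
    by auto
  define A' where "A' = mat n n (\<lambda>(r, l). if l \<in> {1..<n} then A $$ (r, l) + A $$ (r, 0) * - ?P l else A $$ (r, l))"
  have A': "(col_step n)\<^sup>*\<^sup>* A A'" "A' \<in> carrier_mat n n"
    unfolding A'_def by (rule col_steps_add_col_multiples[OF A n]; auto) simp
  have A'_entry: "A' $$ (0, j) = (if j = 0 then ?u 0 else ?u j - ?u 0 * ?P j)" if "j < n" for j
    using that n unfolding A'_def by simp
  have zero: "?u j * (1 - g j) = 0" if "j \<in> {1..<n}" for j
    using g that by (simp add: right_diff_distrib)
  have "(\<Sum>j\<in>{1..<n}. A' $$ (0, j) * (1 - g j))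
      = (\<Sum>j\<in>{1..<n}. ?u j * (1 - g j) - ?u 0 * (?P j * (1 - g j)))"
    by (intro sum.cong) (auto simp: A'_entry left_diff_distrib mult.assoc)
  also have "\<dots> = (\<Sum>j\<in>{1..<n}. ?u j * (1 - g j)) - ?u 0 * (\<Sum>j\<in>{1..<n}. ?P j * (1 - g j))"
    by (simp add: sum_subtractf sum_distrib_left)
  also have "\<dots> = - (?u 0 * (1 - ?P n))"
    using zero sum_prod_list_telescope[of n g] n by simp
  finally have sum: "(\<Sum>j\<in>{1..<n}. A' $$ (0, j) * (1 - g j)) = - (?u 0 * (1 - ?P n))" .
  have "(\<Sum>j\<in>{1..<n}. A' $$ (0, j) * (1 - g j)) \<in> right_span (\<lambda>j. A' $$ (0, j)) ({..<n} - {0})"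
    unfolding right_span_def J by (rule CollectI, rule exI[of _ "\<lambda>j. 1 - g j"], rule refl)
  then obtain B where B: "(col_step n)\<^sup>*\<^sup>* A' B"
    and "B \<in> carrier_mat n n" and B00: "B $$ (0, 0) = A' $$ (0, 0) + (\<Sum>j\<in>{1..<n}. A' $$ (0, j) * (1 - g j))"
    and "\<And>l. l < n \<Longrightarrow> l \<noteq> 0 \<Longrightarrow> B $$ (0, l) = A' $$ (0, l)"
    using col_steps_add_right_span[OF A'(2) n] by blast
  show thesis
  proof
    show "(col_step n)\<^sup>*\<^sup>* A B"
      using A'(1) B by (rule rtranclp_trans)
    show "B $$ (0, 0) = ?u 0 * ?P n"
      using B00 sum A'_entry[OF n] by (simp add: algebra_simps)
  qed
qed

lemma sum_lessThan_split_first: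
  fixes f :: "nat \<Rightarrow> 'a::comm_monoid_add"
  assumes "0 < n"
  shows "(\<Sum>j<n. f j) = f 0 + (\<Sum>j\<in>{1..<n}. f j)"
  using assms by (simp add: lessThan_atLeast0 sum.atLeast_Suc_lessThan)

lemma col_steps_first_entry_exchange:
  fixes A X :: "'a::ring_1 mat"
  assumes ex: "exchange_ring TYPE('a)" and A: "A \<in> carrier_mat n n" and X: "X \<in> carrier_mat n n"
    and AX: "A * X = 1\<^sub>m n" and n: "0 < n"
  obtains B e s where "(col_step n)\<^sup>*\<^sup>* A B" "e * e = e" "e = A $$ (0, 0) * s"
    "B $$ (0, 0) = e * A $$ (0, 0)"
proof -
  let ?d = "A $$ (0, 0)"
  obtain e r t where e: "e * e = e" and er: "e = ?d * X $$ (0, 0) * r"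
    and et: "1 - e = (1 - ?d * X $$ (0, 0)) * t"
    by (rule exchange_ringD[OF ex])
  have "?d * X $$ (0, 0) + (\<Sum>j\<in>{1..<n}. A $$ (0, j) * X $$ (j, 0)) = 1"
    using mult_mat_eq_one_index_sum[OF A X AX n n]
      sum_lessThan_split_first[OF n, of "\<lambda>j. A $$ (0, j) * X $$ (j, 0)"] by simp
  then have "1 - ?d * X $$ (0, 0) = (\<Sum>j\<in>{1..<n}. A $$ (0, j) * X $$ (j, 0))"
    by (metis add_diff_cancel_left')
  moreover have "{..<n} - {0} = {1..<n}"
    by auto
  ultimately have "(1 - e) * - ?d = (\<Sum>j\<in>{..<n} - {0}. A $$ (0, j) * (X $$ (j, 0) * t * - ?d))"
    by (simp add: et sum_distrib_right mult.assoc sum_negf)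
  then have "(1 - e) * - ?d \<in> right_span (\<lambda>j. A $$ (0, j)) ({..<n} - {0})"
    unfolding right_span_def by (intro CollectI exI) assumption
  then obtain B where "(col_step n)\<^sup>*\<^sup>* A B" and B00: "B $$ (0, 0) = ?d + (1 - e) * - ?d"
    using col_steps_add_right_span[OF A n] by blast
  moreover have "?d + (1 - e) * - ?d = e * ?d"
    by (simp add: algebra_simps)
  moreover have "e = ?d * (X $$ (0, 0) * r)"
    using er by (simp add: mult.assoc)
  ultimately show thesis
    using that e by simp
qed

lemma col_steps_first_entry_idempotent_mult_prod_list:
  fixes A X :: "'a::ring_1 mat"
  assumes ex: "exchange_ring TYPE('a)" and A: "A \<in> carrier_mat n n" and X: "X \<in> carrier_mat n n"
    and AX: "A * X = 1\<^sub>m n" and n: "0 < n"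
    and g: "\<And>j. 1 \<le> j \<Longrightarrow> j < n \<Longrightarrow> A $$ (0, j) * g j = A $$ (0, j)"
  defines "d \<equiv> A $$ (0, 0) * prod_list (map g [1..<n])"
  obtains B e s where "(col_step n)\<^sup>*\<^sup>* A B" "e * e = e" "e = d * s" "B $$ (0, 0) = e * d"
proof -
  obtain A' where AA': "(col_step n)\<^sup>*\<^sup>* A A'" and A'd: "A' $$ (0, 0) = d"
    using col_steps_first_entry_mult_prod_list[OF A n g] unfolding d_def by blast
  obtain X' where A': "A' \<in> carrier_mat n n" and X': "X' \<in> carrier_mat n n" "A' * X' = 1\<^sub>m n"
    using col_steps_right_inverse[OF AA' A X AX] .
  obtain B e s where A'B: "(col_step n)\<^sup>*\<^sup>* A' B" and e: "e * e = e" "e = d * s"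
    and B: "B $$ (0, 0) = e * d"
    using col_steps_first_entry_exchange[OF ex A' X' n] unfolding A'd by blast
  show thesis
    using that[OF rtranclp_trans[OF AA' A'B] e B] .
qed

theorem lemma2p7:
  fixes A :: "'a::ring_1 mat" and n :: nat
  assumes "exchange_ring TYPE('a)"
    and "n \<ge> 2"
    and "A \<in> carrier_mat n n"
    and "invertible_mat A"
  shows "\<exists>B d p q. (elem_step n)\<^sup>*\<^sup>* A B \<and> d = B $$ (0,0) \<and> regular_elem d \<and>
           p * p = p \<and> q * q = q \<and>
           range (\<lambda>r. d * r) = range (\<lambda>r. (1 - p) * r) \<and>
           range (\<lambda>r. r * d) = range (\<lambda>r. r * (1 - q)) \<and>
           two_sided_ideal p = UNIV \<and> two_sided_ideal q = UNIV"
proof -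
  have n: "0 < n"
    using assms(2) by simp
  obtain X where X: "X \<in> carrier_mat n n" "A * X = 1\<^sub>m n"
    using invertible_mat_right_inverse[OF assms(3,4)] .
  obtain A1 X1 f where A01: "(col_step n)\<^sup>*\<^sup>* A A1" and A1: "A1 \<in> carrier_mat n n"
    and X1: "X1 \<in> carrier_mat n n" "A1 * X1 = 1\<^sub>m n"
    and split: "split_first_row n (\<lambda>j. A1 $$ (0, j)) (\<lambda>j l. X1 $$ (j, l)) f"
    using col_steps_split_first_row[OF assms(1,3) X] .
  interpret split_first_row n "\<lambda>j. A1 $$ (0, j)" "\<lambda>j l. X1 $$ (j, l)" f
    by (fact split)
  define d where "d = A1 $$ (0, 0) * prod_list (map g [1..<n])"
  obtain A3 e s where A13: "(col_step n)\<^sup>*\<^sup>* A1 A3" and e: "e * e = e" "e = d * s"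
    and A3: "A3 $$ (0, 0) = e * d"
    using col_steps_first_entry_idempotent_mult_prod_list[OF assms(1) A1 X1 n mult_g] unfolding d_def .
  have "two_sided_ideal (1 - e) = UNIV"
    using e(2) assms(2) unfolding d_def by (intro complement_two_sided_ideal_eq_UNIV) auto
  moreover have "two_sided_ideal (1 - s * (e * d)) = UNIV"
    using mult_mat_eq_one_index_sum[OF A1 X1, of 1 1] assms(2) d_def e
    by (intro corner_two_sided_ideal_eq_UNIV[where a = "\<lambda>k. A1 $$ (1, k)"]) auto
  moreover have "(elem_step n)\<^sup>*\<^sup>* A A3"
    using A01 A13 by (meson col_steps_imp_elem_steps rtranclp_trans)
  ultimately show ?thesis
    using regular_idempotent_mult[OF e] A3 one_minus_idempotent[OF e(1)]
      one_minus_idempotent[OF regular_idempotent_mult(2)[OF e]]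
    by (intro exI[of _ A3, OF exI[of _ "e * d", OF exI[of _ "1 - e", OF exI[of _ "1 - s * (e * d)"]]]]) simp
qed

end
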